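(* Let $\mathfrak g$ be a finite-dimensional Lie algebra over a field $k$ of characteristic zero and let $(A,\cdot)$ be an LR-structure on $\mathfrak g$. Consider the statements: (a) all left multiplications $L(x)$, $x\in A$, are nilpotent; (b) all right multiplications $R(x)$, $x\in A$, are nilpotent; (c) $\mathfrak g$ is nilpotent. Then any two of (a), (b), (c) imply the third.
   Context: An LR-algebra is a vector space $A$ with a bilinear product $\cdot$ satisfying $x\cdot(y\cdot z)=y\cdot(x\cdot z)$ and $(x\cdot y)\cdot z=(x\cdot z)\cdot y$ for all $x,y,z\in A$. An LR-structure on a Lie algebra $\mathfrak g$ is an LR-algebra product $\cdot$ on the underlying vector space $A$ of $\mathfrak g$ such that $x\cdot y-y\cdot x=[x,y]$ for all $x,y$. $L(x)y=x\cdot y$ and $R(x)y=y\cdot x$. *)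

theory Defs
  imports Complex_Main
begin

definition is_LR_product :: "('k::field \<Rightarrow> 'v::ab_group_add \<Rightarrow> 'v) \<Rightarrow> ('v \<Rightarrow> 'v \<Rightarrow> 'v) \<Rightarrow> bool" where
  "is_LR_product scale p \<longleftrightarrow>
     (\<forall>x. Vector_Spaces.linear scale scale (p x)) \<and>
     (\<forall>y. Vector_Spaces.linear scale scale (\<lambda>x. p x y)) \<and>
     (\<forall>x y z. p x (p y z) = p y (p x z)) \<and>
     (\<forall>x y z. p (p x y) z = p (p x z) y)"


fun lower_central :: "('k::field \<Rightarrow> 'v::ab_group_add \<Rightarrow> 'v) \<Rightarrow> ('v \<Rightarrow> 'v \<Rightarrow> 'v) \<Rightarrow> nat \<Rightarrow> 'v set" where
  "lower_central scale br 0 = UNIV"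
| "lower_central scale br (Suc n) =
     module.span scale {br x y | x y. y \<in> lower_central scale br n}"

definition lie_nilpotent :: "('k::field \<Rightarrow> 'v::ab_group_add \<Rightarrow> 'v) \<Rightarrow> ('v \<Rightarrow> 'v \<Rightarrow> 'v) \<Rightarrow> bool" where
  "lie_nilpotent scale br \<longleftrightarrow> (\<exists>n. lower_central scale br n = {0})"

definition nilpotent_map :: "('v::zero \<Rightarrow> 'v) \<Rightarrow> bool" where
  "nilpotent_map f \<longleftrightarrow> (\<exists>n. (f ^^ n) = (\<lambda>_. 0))"

end

theory Submission
  imports Defs
begin

(* (a)+(b) => (c): the left identity makes all L(x) commute, the right identity
   all R(x).  Finitely many commuting nilpotent maps (the L(b) for b in a basis)
   have vanishing products of large length, so the iterated spans of
   L-images and of R-images are eventually 0.  Every element of g^(n+1) is a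
   combination of products p z w with z an iterated R-image and w an iterated
   L-image of total depth n, hence g^(n+1) = 0 for large n.

   (a)+(c) => (b) and (b)+(c) => (a): every g^k is stable under all L(x) and
   R(x), and L(x) - R(x) = ad x maps g^k into g^(k+1).  A linear map that agrees
   with a nilpotent map modulo a finite separating filtration is nilpotent. *)

subsection \<open>Products of commuting nilpotent maps\<close>

lemma funpow_commute_comp:
  assumes "g \<circ> f = f \<circ> g"
  shows "g \<circ> f ^^ n = f ^^ n \<circ> g"
proof (induction n)
  case (Suc n)
  have "g \<circ> f ^^ Suc n = (g \<circ> f) \<circ> f ^^ n" by (simp add: comp_assoc)
  also have "\<dots> = f \<circ> (g \<circ> f ^^ n)" using assms by (simp add: comp_assoc)
  also have "\<dots> = f \<circ> (f ^^ n \<circ> g)" by (simp only: Suc)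
  also have "\<dots> = f ^^ Suc n \<circ> g" by (simp only: funpow.simps comp_assoc)
  finally show ?case .
qed simp

lemma foldr_comp_extract:
  assumes "\<forall>g\<in>set fs. g \<circ> f = f \<circ> g"
  shows "foldr (\<circ>) fs id
           = f ^^ length (filter (\<lambda>g. g = f) fs) \<circ> foldr (\<circ>) (filter (\<lambda>g. g \<noteq> f) fs) id"
  using assms
proof (induction fs)
  case (Cons g gs)
  let ?k = "length (filter (\<lambda>g. g = f) gs)"
  let ?rest = "foldr (\<circ>) (filter (\<lambda>g. g \<noteq> f) gs) id"
  have cons: "foldr (\<circ>) (h # r) id = h \<circ> foldr (\<circ>) r id" for h and r :: "('a \<Rightarrow> 'a) list"
    by simp
  have IH: "foldr (\<circ>) gs id = f ^^ ?k \<circ> ?rest" using Cons.prems by (intro Cons.IH) simp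
  show ?case
  proof (cases "g = f")
    case True
    then have "filter (\<lambda>g. g = f) (g # gs) = f # filter (\<lambda>g. g = f) gs"
      and "filter (\<lambda>g. g \<noteq> f) (g # gs) = filter (\<lambda>g. g \<noteq> f) gs" by simp_all
    then show ?thesis using True by (simp only: cons IH length_Cons funpow.simps comp_assoc)
  next
    case False
    have "g \<circ> f ^^ ?k = f ^^ ?k \<circ> g"
      by (intro funpow_commute_comp bspec[OF Cons.prems]) simp
    then have "g \<circ> (f ^^ ?k \<circ> ?rest) = f ^^ ?k \<circ> (g \<circ> ?rest)"
      by (simp only: o_assoc)
    moreover have "filter (\<lambda>g. g = f) (g # gs) = filter (\<lambda>g. g = f) gs"
      and "filter (\<lambda>g. g \<noteq> f) (g # gs) = g # filter (\<lambda>g. g \<noteq> f) gs" using False by simp_all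
    ultimately show ?thesis by (simp only: cons IH)
  qed
qed simp

lemma funpow_vanish_beyond:
  fixes f :: "'v::zero \<Rightarrow> 'v"
  assumes "f ^^ e = (\<lambda>_. 0)" and "f 0 = 0" and "e \<le> k"
  shows "f ^^ k = (\<lambda>_. 0)"
proof -
  have fix0: "(f ^^ m) 0 = 0" for m by (induction m) (simp_all add: assms(2))
  have "f ^^ k = f ^^ (k - e) \<circ> f ^^ e" using assms(3) by (simp flip: funpow_add)
  then show ?thesis using assms(1) fix0 by (simp add: fun_eq_iff)
qed

lemma commuting_nilpotent_products_vanish:
  fixes FF :: "('v::zero \<Rightarrow> 'v) set"
  assumes "finite FF"
    and "\<forall>f\<in>FF. \<exists>e. f ^^ e = (\<lambda>_. 0)"
    and "\<forall>f\<in>FF. \<forall>g\<in>FF. g \<circ> f = f \<circ> g"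
    and "\<forall>f\<in>FF. f 0 = 0"
  shows "\<exists>K. \<forall>fs. set fs \<subseteq> FF \<longrightarrow> K \<le> length fs \<longrightarrow> foldr (\<circ>) fs id = (\<lambda>_. 0)"
  using assms
proof (induction FF rule: finite_induct)
  case empty
  show ?case by (rule exI[of _ 1]) auto
next
  case (insert f G)
  then obtain K where K: "\<forall>fs. set fs \<subseteq> G \<longrightarrow> K \<le> length fs \<longrightarrow> foldr (\<circ>) fs id = (\<lambda>_. 0)"
    by blast
  obtain e where e: "f ^^ e = (\<lambda>_. 0)" using insert.prems by auto
  have f0: "f 0 = 0" using insert.prems by auto
  have fix0: "(f ^^ m) 0 = 0" for m by (induction m) (simp_all add: f0)
  show ?case
  proof (intro exI[of _ "K + e"] allI impI)
    fix fs assume fs: "set fs \<subseteq> insert f G" and len: "K + e \<le> length fs"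
    let ?k = "length (filter (\<lambda>g. g = f) fs)"
    let ?r = "filter (\<lambda>g. g \<noteq> f) fs"
    have split: "foldr (\<circ>) fs id = f ^^ ?k \<circ> foldr (\<circ>) ?r id"
      using fs insert.prems by (intro foldr_comp_extract) blast
    show "foldr (\<circ>) fs id = (\<lambda>_. 0)"
    proof (cases "e \<le> ?k")
      case True
      then show ?thesis using split funpow_vanish_beyond[OF e f0] by (simp add: fun_eq_iff)
    next
      case False
      have "length ?r + ?k = length fs"
        using sum_length_filter_compl[of "\<lambda>g. g = f" fs] by simp
      then have "K \<le> length ?r" using len False by linarith
      moreover have "set ?r \<subseteq> G" using fs by auto
      ultimately have "foldr (\<circ>) ?r id = (\<lambda>_. 0)" using K by blast
      then show ?thesis using split fix0 by (simp add: fun_eq_iff)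
    qed
  qed
qed

subsection \<open>Lower central series and filtrations\<close>

context vector_space
begin

lemma hom_span_subset:
  assumes "module_hom scale scale f" and "\<forall>a\<in>A. f a \<in> span B" and "v \<in> span A"
  shows "f v \<in> span B"
proof -
  have "f v \<in> f ` span A" using assms(3) by blast
  also have "\<dots> = span (f ` A)" using module_hom.span_image[OF assms(1)] by simp
  also have "\<dots> \<subseteq> span B" using assms(2) by (intro span_minimal) auto
  finally show ?thesis .
qed

lemma lower_central_subspace: "subspace (lower_central scale br k)"
  by (cases k) auto

lemma lower_central_Suc_subset:
  assumes "subspace S" and "\<And>x y. y \<in> lower_central scale br k \<Longrightarrow> br x y \<in> S"
  shows "lower_central scale br (Suc k) \<subseteq> S"
proof -
  have "{br x y | x y. y \<in> lower_central scale br k} \<subseteq> S" using assms(2) by blast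
  then show ?thesis using assms(1) by (simp add: span_minimal)
qed

lemma lower_central_bracket:
  "y \<in> lower_central scale br k \<Longrightarrow> br x y \<in> lower_central scale br (Suc k)"
  by (auto intro: span_base)

lemma lower_central_Suc_le: "lower_central scale br (Suc k) \<subseteq> lower_central scale br k"
proof (induction k)
  case (Suc k)
  show ?case
    using Suc by (intro lower_central_Suc_subset lower_central_subspace lower_central_bracket) blast
qed simp

lemma nilpotent_by_filtration:
  fixes G :: "nat \<Rightarrow> 'b set"
  assumes sub: "\<And>k. subspace (G k)" and G0: "G 0 = UNIV" and Gn: "G n = {0}"
    and hf: "module_hom scale scale f"
    and invf: "\<And>k w. w \<in> G k \<Longrightarrow> f w \<in> G k"
    and invh: "\<And>k w. w \<in> G k \<Longrightarrow> h w \<in> G k"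
    and close: "\<And>k w. w \<in> G k \<Longrightarrow> f w - h w \<in> G (Suc k)"
    and nh: "nilpotent_map h"
  shows "nilpotent_map f"
proof -
  obtain e where e: "h ^^ e = (\<lambda>_. 0)" using nh unfolding nilpotent_map_def by blast
  have powers_close: "(f ^^ m) w - (h ^^ m) w \<in> G (Suc k)" if w: "w \<in> G k" for w k m
  proof (induction m)
    case 0 then show ?case using sub subspace_0 by simp
  next
    case (Suc m)
    have "(h ^^ m) w \<in> G k" by (induction m) (simp_all add: w invh)
    then have "f ((f ^^ m) w - (h ^^ m) w) + (f ((h ^^ m) w) - h ((h ^^ m) w)) \<in> G (Suc k)"
      using Suc invf close sub subspace_add by blast
    moreover have "(f ^^ Suc m) w - (h ^^ Suc m) w
        = f ((f ^^ m) w - (h ^^ m) w) + (f ((h ^^ m) w) - h ((h ^^ m) w))"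
      by (simp add: module_hom.diff[OF hf])
    ultimately show ?case by (simp only:)
  qed
  have descend: "(f ^^ (e * c)) v \<in> G c" for c v
  proof (induction c)
    case (Suc c)
    have "(f ^^ e) ((f ^^ (e * c)) v) \<in> G (Suc c)"
      using powers_close[OF Suc, of e] e by simp
    then show ?case by (simp add: funpow_add mult.commute[of e])
  qed (simp add: G0)
  then have "f ^^ (e * n) = (\<lambda>_. 0)" using Gn by auto
  then show ?thesis unfolding nilpotent_map_def by blast
qed

end

context finite_dimensional_vector_space
begin

lemma lower_central_in_span_words:
  assumes lin1: "\<forall>x. module_hom scale scale (F x)"
    and lin2: "\<forall>u. module_hom scale scale (\<lambda>x. F x u)"
  shows "lower_central scale F n
           \<subseteq> span {foldr (\<circ>) fs id v | fs v. set fs \<subseteq> F ` Basis \<and> length fs = n}"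
    (is "_ \<subseteq> span (?W n)")
proof (induction n)
  case 0
  have "v \<in> ?W 0" for v by (intro CollectI exI[of _ "[]"] exI[of _ v]) simp
  then show ?case by (blast intro: span_base)
next
  case (Suc n)
  have word: "F x u \<in> span (?W (Suc n))" if hu: "u \<in> ?W n" for x u
  proof -
    obtain fs v where u: "u = foldr (\<circ>) fs id v" "set fs \<subseteq> F ` Basis" "length fs = n"
      using hu by blast
    have "F b u \<in> ?W (Suc n)" if "b \<in> Basis" for b
    proof (intro CollectI exI[of _ "F b # fs"] exI[of _ v] conjI)
      show "F b u = foldr (\<circ>) (F b # fs) id v" by (simp only: u(1) foldr.simps comp_apply)
    qed (use u that in auto)
    then have "\<forall>b\<in>Basis. F b u \<in> span (?W (Suc n))" by (blast intro: span_base)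
    moreover have "x \<in> span Basis" by (simp add: span_Basis)
    ultimately show ?thesis by (rule hom_span_subset[OF spec[OF lin2, of u]])
  qed
  show ?case
  proof (intro lower_central_Suc_subset subspace_span)
    fix x y assume "y \<in> lower_central scale F n"
    then have "y \<in> span (?W n)" using Suc.IH by blast
    moreover have "\<forall>u\<in>?W n. F x u \<in> span (?W (Suc n))" using word by blast
    ultimately show "F x y \<in> span (?W (Suc n))" by (intro hom_span_subset[OF spec[OF lin1, of x]])
  qed
qed

lemma lower_central_vanishes_if_commuting_nilpotent:
  assumes lin1: "\<forall>x. module_hom scale scale (F x)"
    and lin2: "\<forall>u. module_hom scale scale (\<lambda>x. F x u)"
    and comm: "\<forall>x y. F x \<circ> F y = F y \<circ> F x"
    and nil: "\<forall>x. nilpotent_map (F x)"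
  shows "\<exists>N. \<forall>n\<ge>N. lower_central scale F n = {0}"
proof -
  have fin: "finite (F ` Basis)" using finite_Basis by simp
  have nil': "\<forall>f\<in>F ` Basis. \<exists>e. f ^^ e = (\<lambda>_. 0)"
    using nil by (simp add: nilpotent_map_def)
  have comm': "\<forall>f\<in>F ` Basis. \<forall>g\<in>F ` Basis. g \<circ> f = f \<circ> g" by (simp add: comm)
  have zero: "\<forall>f\<in>F ` Basis. f 0 = 0" by (simp add: module_hom.zero[OF spec[OF lin1]])
  obtain K
    where K: "\<forall>fs. set fs \<subseteq> F ` Basis \<longrightarrow> K \<le> length fs \<longrightarrow> foldr (\<circ>) fs id = (\<lambda>_. 0)"
    using commuting_nilpotent_products_vanish[OF fin nil' comm' zero] by blast
  have "lower_central scale F n = {0}" if "K \<le> n" for n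
  proof -
    have "{foldr (\<circ>) fs id v | fs v. set fs \<subseteq> F ` Basis \<and> length fs = n} \<subseteq> {0}"
    proof clarify
      fix fs :: "('b \<Rightarrow> 'b) list" and v
      assume "set fs \<subseteq> F ` Basis" "n = length fs"
      then have "foldr (\<circ>) fs id = (\<lambda>_. 0)" using K that by blast
      then show "foldr (\<circ>) fs id v = 0" by simp
    qed
    then have "lower_central scale F n \<subseteq> {0}"
      using lower_central_in_span_words[OF lin1 lin2, of n] span_minimal[OF _ subspace_single_0]
      by blast
    then show ?thesis using lower_central_subspace subspace_0 by blast
  qed
  then show ?thesis by blast
qed

end

subsection \<open>LR-structures\<close>

locale LR_structure = vector_space scale
  for scale :: "'a::field \<Rightarrow> 'b::ab_group_add \<Rightarrow> 'b" +
  fixes p :: "'b \<Rightarrow> 'b \<Rightarrow> 'b"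
  assumes LR: "is_LR_product scale p"
begin

lemma left_hom: "module_hom scale scale (p x)"
  using LR module_hom_iff_linear unfolding is_LR_product_def by blast

lemma right_hom: "module_hom scale scale (\<lambda>x. p x y)"
  using LR module_hom_iff_linear unfolding is_LR_product_def by blast

lemma left_comm: "p x (p y z) = p y (p x z)"
  using LR unfolding is_LR_product_def by blast

lemma right_comm: "p (p x y) z = p (p x z) y"
  using LR unfolding is_LR_product_def by blast

abbreviation G :: "nat \<Rightarrow> 'b set" where
  "G \<equiv> lower_central scale (\<lambda>x y. p x y - p y x)"

text \<open>Each g^k is stable under all left multiplications; this uses the identity
  x(yu - uy) = (y(xu) - (xu)y) + ((xy)u - u(xy)).\<close>
lemma lower_central_left_stable: "w \<in> G k \<Longrightarrow> p x w \<in> G k"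
proof (induction k arbitrary: x w)
  case (Suc k)
  have gen: "p x (p y u - p u y) \<in> G (Suc k)" if u: "u \<in> G k" for x y u
  proof -
    have "p x (p y u - p u y) = p y (p x u) - p u (p x y)"
      by (simp only: module_hom.diff[OF left_hom] left_comm[of x y u] left_comm[of x u y])
    also have "\<dots> = (p y (p x u) - p (p x u) y) + (p (p x y) u - p u (p x y))"
      by (simp only: right_comm[of x y u]) simp
    finally have eq: "p x (p y u - p u y) = (p y (p x u) - p (p x u) y) + (p (p x y) u - p u (p x y))" .
    have "p y (p x u) - p (p x u) y \<in> G (Suc k)"
      using Suc.IH[OF u] by (rule lower_central_bracket)
    moreover have "p (p x y) u - p u (p x y) \<in> G (Suc k)"
      using u by (rule lower_central_bracket)
    ultimately show ?thesis unfolding eq by (rule subspace_add[OF lower_central_subspace])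
  qed
  have w: "w \<in> span {p y u - p u y | y u. u \<in> G k}" using Suc.prems by simp
  have "\<forall>a\<in>{p y u - p u y | y u. u \<in> G k}. p x a \<in> span (G (Suc k))"
    using gen by (auto intro: span_base)
  then have "p x w \<in> span (G (Suc k))" using w by (rule hom_span_subset[OF left_hom])
  then show ?case by (simp only: span_eq_iff[THEN iffD2, OF lower_central_subspace])
qed simp

text \<open>Stability under right multiplications follows, since R(x) = L(x) - ad x and
  ad x maps g^k into g^(k+1), which is contained in g^k.\<close>
lemma lower_central_right_stable: "w \<in> G k \<Longrightarrow> p w x \<in> G k"
proof -
  assume w: "w \<in> G k"
  have "p x w \<in> G k" using w by (rule lower_central_left_stable)
  moreover have "p x w - p w x \<in> G k"
    using lower_central_bracket[OF w] lower_central_Suc_le by blast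
  ultimately have "p x w - (p x w - p w x) \<in> G k"
    using lower_central_subspace subspace_diff by blast
  then show ?thesis by simp
qed

text \<open>(a) and (c) imply (b), and (b) and (c) imply (a): L(x) and R(x) preserve the
  series g^k and differ by ad x, which raises the degree by one.\<close>
lemma right_nilpotent_if_left_nilpotent:
  assumes "nilpotent_map (p x)" and "G n = {0}"
  shows "nilpotent_map (\<lambda>y. p y x)"
proof (rule nilpotent_by_filtration[where G = G and h = "p x"])
  show "p w x - p x w \<in> G (Suc k)" if "w \<in> G k" for w k
  proof -
    have "p x w - p w x \<in> G (Suc k)" using that by (rule lower_central_bracket)
    then have "- (p x w - p w x) \<in> G (Suc k)" by (rule subspace_neg[OF lower_central_subspace])
    then show ?thesis by simp
  qed
qed (fact lower_central_subspace lower_central.simps(1) assms(2) right_hom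
      lower_central_right_stable lower_central_left_stable assms(1))+

lemma left_nilpotent_if_right_nilpotent:
  assumes "nilpotent_map (\<lambda>y. p y x)" and "G n = {0}"
  shows "nilpotent_map (p x)"
proof (rule nilpotent_by_filtration[where G = G and h = "\<lambda>y. p y x"])
  show "p x w - p w x \<in> G (Suc k)" if "w \<in> G k" for w k
    using that by (rule lower_central_bracket)
qed (fact lower_central_subspace lower_central.simps(1) assms(2) left_hom
      lower_central_left_stable lower_central_right_stable assms(1))+

lemma lower_central_in_span_products:
  "G (Suc n) \<subseteq> span {p z w | z w i j. z \<in> lower_central scale (\<lambda>x y. p y x) j
                                    \<and> w \<in> lower_central scale p i \<and> i + j = n}"
    (is "_ \<subseteq> span (?P n)")
proof (induction n)
  case 0
  have gen: "p x y \<in> ?P 0" for x y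
    by (intro CollectI exI[of _ x] exI[of _ y] exI[of _ 0] conjI) simp_all
  show ?case
  proof (rule lower_central_Suc_subset[OF subspace_span])
    show "p x y - p y x \<in> span (?P 0)" for x y by (intro span_diff span_base gen)
  qed
next
  case (Suc n)
  have left: "p x u \<in> ?P (Suc n)" and right: "p u x \<in> ?P (Suc n)" if hu: "u \<in> ?P n" for x u
  proof -
    obtain z w i j where u: "u = p z w" "z \<in> lower_central scale (\<lambda>x y. p y x) j"
        "w \<in> lower_central scale p i" "i + j = n"
      using hu by blast
    have "p x u = p z (p x w)" using u(1) left_comm by simp
    moreover have "p x w \<in> lower_central scale p (Suc i)" using u(3) by (rule lower_central_bracket)
    ultimately show "p x u \<in> ?P (Suc n)"
      using u(2,4) by (intro CollectI exI[of _ z] exI[of _ "p x w"] exI[of _ "Suc i"] exI[of _ j]) simp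
    have "p u x = p (p z x) w" using u(1) right_comm by simp
    moreover have "p z x \<in> lower_central scale (\<lambda>x y. p y x) (Suc j)"
      using u(2) by (rule lower_central_bracket)
    ultimately show "p u x \<in> ?P (Suc n)"
      using u(3,4) by (intro CollectI exI[of _ "p z x"] exI[of _ w] exI[of _ i] exI[of _ "Suc j"]) simp
  qed
  show ?case
  proof (rule lower_central_Suc_subset[OF subspace_span])
    fix x y assume "y \<in> G (Suc n)"
    then have y: "y \<in> span (?P n)" using Suc.IH by blast
    have "p x y \<in> span (?P (Suc n))"
      by (rule hom_span_subset[OF left_hom _ y]) (rule ballI, rule span_base, erule left)
    moreover have "p y x \<in> span (?P (Suc n))"
      by (rule hom_span_subset[OF right_hom _ y]) (rule ballI, rule span_base, erule right)
    ultimately show "p x y - p y x \<in> span (?P (Suc n))" by (rule span_diff)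
  qed
qed

end

locale finite_dimensional_LR_structure =
  LR_structure scale p + finite_dimensional_vector_space scale Basis
  for scale :: "'a::field \<Rightarrow> 'b::ab_group_add \<Rightarrow> 'b" and p and Basis
begin

lemma lie_nilpotent_if_left_right_nilpotent:
  assumes nL: "\<forall>x. nilpotent_map (p x)" and nR: "\<forall>x. nilpotent_map (\<lambda>y. p y x)"
  shows "\<exists>n. G n = {0}"
proof -
  have "\<exists>N. \<forall>n\<ge>N. lower_central scale p n = {0}"
  proof (rule lower_central_vanishes_if_commuting_nilpotent)
    show "\<forall>x y. p x \<circ> p y = p y \<circ> p x" by (simp add: fun_eq_iff left_comm)
  qed (simp_all add: left_hom right_hom nL)
  then obtain N1 where N1: "\<forall>n\<ge>N1. lower_central scale p n = {0}" ..
  have "\<exists>N. \<forall>n\<ge>N. lower_central scale (\<lambda>x y. p y x) n = {0}"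
  proof (rule lower_central_vanishes_if_commuting_nilpotent)
    show "\<forall>x y. (\<lambda>z. p z x) \<circ> (\<lambda>z. p z y) = (\<lambda>z. p z y) \<circ> (\<lambda>z. p z x)"
      by (simp add: fun_eq_iff right_comm)
  qed (simp_all add: left_hom right_hom nR)
  then obtain N2 where N2: "\<forall>n\<ge>N2. lower_central scale (\<lambda>x y. p y x) n = {0}" ..
  have "{p z w | z w i j. z \<in> lower_central scale (\<lambda>x y. p y x) j
                       \<and> w \<in> lower_central scale p i \<and> i + j = N1 + N2} \<subseteq> {0}"
  proof clarify
    fix z w i j
    assume "z \<in> lower_central scale (\<lambda>x y. p y x) j" "w \<in> lower_central scale p i" "i + j = N1 + N2"
    then have "N2 \<le> j \<or> N1 \<le> i" by linarith
    then have "z = 0 \<or> w = 0" using N1 N2 \<open>z \<in> _\<close> \<open>w \<in> _\<close> by blast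
    then show "p z w = 0" using module_hom.zero[OF left_hom] module_hom.zero[OF right_hom] by auto
  qed
  then have "G (Suc (N1 + N2)) \<subseteq> {0}"
    using lower_central_in_span_products span_minimal[OF _ subspace_single_0] by blast
  then show ?thesis using lower_central_subspace subspace_0 by blast
qed

end

theorem mainTheorem2:
  fixes scale :: "'k::field_char_0 \<Rightarrow> 'v::ab_group_add \<Rightarrow> 'v"
    and Basis :: "'v set"
    and p :: "'v \<Rightarrow> 'v \<Rightarrow> 'v"
  assumes fd: "finite_dimensional_vector_space scale Basis"
    and LR: "is_LR_product scale p"
  defines "br \<equiv> (\<lambda>x y. p x y - p y x)"
  shows "((\<forall>x. nilpotent_map (p x)) \<and> (\<forall>x. nilpotent_map (\<lambda>y. p y x))
            \<longrightarrow> lie_nilpotent scale br)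
       \<and> ((\<forall>x. nilpotent_map (p x)) \<and> lie_nilpotent scale br
            \<longrightarrow> (\<forall>x. nilpotent_map (\<lambda>y. p y x)))
       \<and> ((\<forall>x. nilpotent_map (\<lambda>y. p y x)) \<and> lie_nilpotent scale br
            \<longrightarrow> (\<forall>x. nilpotent_map (p x)))"
proof -
  interpret LR: finite_dimensional_LR_structure scale p Basis
    using fd LR by (simp add: finite_dimensional_LR_structure_def LR_structure_def
        LR_structure_axioms_def finite_dimensional_vector_space_def)
  have lie: "lie_nilpotent scale br \<longleftrightarrow> (\<exists>n. LR.G n = {0})"
    by (simp add: lie_nilpotent_def br_def)
  show ?thesis unfolding lie
  proof (intro conjI impI allI)
    assume "(\<forall>x. nilpotent_map (p x)) \<and> (\<forall>x. nilpotent_map (\<lambda>y. p y x))"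
    then show "\<exists>n. LR.G n = {0}" by (intro LR.lie_nilpotent_if_left_right_nilpotent) simp_all
  next
    fix x assume "(\<forall>x. nilpotent_map (p x)) \<and> (\<exists>n. LR.G n = {0})"
    then show "nilpotent_map (\<lambda>y. p y x)" using LR.right_nilpotent_if_left_nilpotent by blast
  next
    fix x assume "(\<forall>x. nilpotent_map (\<lambda>y. p y x)) \<and> (\<exists>n. LR.G n = {0})"
    then show "nilpotent_map (p x)" using LR.left_nilpotent_if_right_nilpotent by blast
  qed
qed

end
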